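(* For any stationary process over a finite alphabet and every $L\ge2$, $$h'_\mu(L)-h_\mu(L)\ \ge\ \frac{\mathbf{E}'(L)}{L}.$$
   Context: $H(L)$ is the Shannon entropy (base 2) of $S_1\cdots S_L$, $H(0)=0$; $h_\mu(L)=H(L)-H(L-1)$; $h'_\mu(L)=H(L)/L$. For even $L$, $\mathbf{E}'(L)=I[S_1\cdots S_{L/2};\,S_{L/2+1}\cdots S_L]$ (mutual information between the two halves of an $L$-block); for odd $L$, $\mathbf{E}'(L)=\mathbf{E}'(L-1)$. *)

theory Defs
  imports "HOL-Probability.Probability"
begin

text \<open>A discrete-time process over a finite alphabet 'a is modelled by random variables
  X :: nat => 'm => 'a on a probability space M; S_1 S_2 ... correspond to X 0, X 1, ....\<close>

definition block_prob :: "'m measure \<Rightarrow> (nat \<Rightarrow> 'm \<Rightarrow> 'a) \<Rightarrow> nat \<Rightarrow> nat \<Rightarrow> 'a list \<Rightarrow> real" where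
  "block_prob M X s n w = measure M {\<omega> \<in> space M. map (\<lambda>i. X (s + i) \<omega>) [0..<n] = w}"

definition stationary_process :: "'m measure \<Rightarrow> (nat \<Rightarrow> 'm \<Rightarrow> 'a) \<Rightarrow> bool" where
  "stationary_process M X \<longleftrightarrow> prob_space M \<and>
     (\<forall>i. X i \<in> measurable M (count_space UNIV)) \<and>
     (\<forall>s n w. block_prob M X s n w = block_prob M X 0 n w)"

definition words :: "nat \<Rightarrow> 'a list set" where
  "words n = {w. length w = n}"

definition block_entropy :: "'m measure \<Rightarrow> (nat \<Rightarrow> 'm \<Rightarrow> 'a) \<Rightarrow> nat \<Rightarrow> real" where
  "block_entropy M X L =
     - (\<Sum>w\<in>words L. (let p = block_prob M X 0 L w in if p = 0 then 0 else p * log 2 p))"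

definition entropy_gain :: "'m measure \<Rightarrow> (nat \<Rightarrow> 'm \<Rightarrow> 'a) \<Rightarrow> nat \<Rightarrow> real" where
  "entropy_gain M X L = block_entropy M X L - block_entropy M X (L - 1)"

definition entropy_rate_est :: "'m measure \<Rightarrow> (nat \<Rightarrow> 'm \<Rightarrow> 'a) \<Rightarrow> nat \<Rightarrow> real" where
  "entropy_rate_est M X L = block_entropy M X L / real L"

definition halves_mutual_info :: "'m measure \<Rightarrow> (nat \<Rightarrow> 'm \<Rightarrow> 'a) \<Rightarrow> nat \<Rightarrow> real" where
  "halves_mutual_info M X m =
     (\<Sum>u\<in>words m. \<Sum>v\<in>words m.
        (let pj = block_prob M X 0 (2 * m) (u @ v);
             pu = block_prob M X 0 m u;
             pv = block_prob M X m m v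
         in if pj = 0 then 0 else pj * log 2 (pj / (pu * pv))))"

definition excess_est :: "'m measure \<Rightarrow> (nat \<Rightarrow> 'm \<Rightarrow> 'a) \<Rightarrow> nat \<Rightarrow> real" where
  "excess_est M X L =
     (if even L then halves_mutual_info M X (L div 2) else halves_mutual_info M X ((L - 1) div 2))"

end

theory Submission
  imports Defs
begin

(*
  Strong subadditivity of Shannon entropy (Gibbs' inequality) together with stationarity
  gives H(k+n+l) + H(n) <= H(k+n) + H(n+l). For k = l = 1 this says that the block entropy
  H is concave, i.e. the gains h(j) = H(j) - H(j-1) are nonincreasing. For m = L div 2
  stationarity also gives E'(L) = 2 H(m) - H(2m), and bounding each gain in H(2m) - H(m)
  and in H(L) - H(2m) from below by h(L) yields E'(L) <= H(L) - L h(L).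
*)

lemma mult_log_ratio_expand:
  fixes p a b c :: real
  assumes "0 \<le> p" and "0 < p \<Longrightarrow> 0 < a \<and> 0 < b \<and> 0 < c"
  shows "p * log 2 (p * c / (a * b)) = p * log 2 p + p * log 2 c - p * log 2 a - p * log 2 b"
  using assms by (cases "p = 0") (auto simp: log_divide log_mult algebra_simps)

lemma gibbs_inequality:
  fixes p q :: "'i \<Rightarrow> real"
  assumes "finite I" and "\<And>i. i \<in> I \<Longrightarrow> 0 \<le> p i" and "\<And>i. i \<in> I \<Longrightarrow> 0 \<le> q i"
    and "\<And>i. i \<in> I \<Longrightarrow> 0 < p i \<Longrightarrow> 0 < q i" and "sum q I \<le> sum p I"
  shows "0 \<le> (\<Sum>i\<in>I. p i * log 2 (p i / q i))"
proof -
  have "(p i - q i) / ln 2 \<le> p i * log 2 (p i / q i)" if "i \<in> I" for i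
  proof (cases "p i = 0")
    case True
    then show ?thesis using assms(3)[OF that] by simp
  next
    case False
    with assms(2,4) that have p: "0 < p i" and q: "0 < q i" by force+
    have "ln (q i / p i) \<le> q i / p i - 1"
      using p q by (intro ln_le_minus_one) simp
    then have "p i - q i \<le> p i * ln (p i / q i)"
      using p q by (simp add: ln_div field_simps)
    then show ?thesis
      by (simp add: log_def divide_right_mono)
  qed
  then have "(\<Sum>i\<in>I. (p i - q i) / ln 2) \<le> (\<Sum>i\<in>I. p i * log 2 (p i / q i))"
    by (rule sum_mono)
  moreover have "0 \<le> (\<Sum>i\<in>I. (p i - q i) / ln 2)"
    using assms(5) by (simp add: sum_divide_distrib[symmetric] sum_subtractf)
  ultimately show ?thesis
    by linarith
qed

lemma mutual_information_eq_entropies: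
  fixes P :: "'u \<Rightarrow> 'v \<Rightarrow> real"
  assumes "finite U" and "finite V" and "\<And>u v. u \<in> U \<Longrightarrow> v \<in> V \<Longrightarrow> 0 \<le> P u v"
  shows "(\<Sum>u\<in>U. \<Sum>v\<in>V. P u v * log 2 (P u v / ((\<Sum>v'\<in>V. P u v') * (\<Sum>u'\<in>U. P u' v))))
       = (\<Sum>u\<in>U. \<Sum>v\<in>V. P u v * log 2 (P u v))
         - (\<Sum>u\<in>U. (\<Sum>v\<in>V. P u v) * log 2 (\<Sum>v\<in>V. P u v))
         - (\<Sum>v\<in>V. (\<Sum>u\<in>U. P u v) * log 2 (\<Sum>u\<in>U. P u v))"
proof -
  have "P u v * log 2 (P u v / ((\<Sum>v'\<in>V. P u v') * (\<Sum>u'\<in>U. P u' v)))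
      = P u v * log 2 (P u v) - P u v * log 2 (\<Sum>v'\<in>V. P u v') - P u v * log 2 (\<Sum>u'\<in>U. P u' v)"
    if "u \<in> U" "v \<in> V" for u v
    using mult_log_ratio_expand[of "P u v" "\<Sum>v'\<in>V. P u v'" "\<Sum>u'\<in>U. P u' v" 1]
      assms that by (simp add: sum_pos2)
  then show ?thesis
    by (simp add: sum_subtractf sum_distrib_right[symmetric] sum.swap[of _ V U] cong: sum.cong)
qed

lemma entropy_strong_subadditivity:
  fixes P :: "'a \<Rightarrow> 'w \<Rightarrow> 'b \<Rightarrow> real"
  assumes "finite A" and "finite W" and "finite B"
    and nonneg: "\<And>a w b. a \<in> A \<Longrightarrow> w \<in> W \<Longrightarrow> b \<in> B \<Longrightarrow> 0 \<le> P a w b"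
  shows "(\<Sum>a\<in>A. \<Sum>w\<in>W. (\<Sum>b\<in>B. P a w b) * log 2 (\<Sum>b\<in>B. P a w b))
         + (\<Sum>w\<in>W. \<Sum>b\<in>B. (\<Sum>a\<in>A. P a w b) * log 2 (\<Sum>a\<in>A. P a w b))
       \<le> (\<Sum>a\<in>A. \<Sum>w\<in>W. \<Sum>b\<in>B. P a w b * log 2 (P a w b))
         + (\<Sum>w\<in>W. (\<Sum>a\<in>A. \<Sum>b\<in>B. P a w b) * log 2 (\<Sum>a\<in>A. \<Sum>b\<in>B. P a w b))"
proof -
  define Paw where "Paw a w = (\<Sum>b\<in>B. P a w b)" for a w
  define Pwb where "Pwb w b = (\<Sum>a\<in>A. P a w b)" for w b
  define Pw where "Pw w = (\<Sum>a\<in>A. \<Sum>b\<in>B. P a w b)" for w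
  define p where "p = (\<lambda>(w, a, b). P a w b)"
  \<comment> \<open>first and last coordinate made conditionally independent given the middle one\<close>
  define q where "q = (\<lambda>(w, a, b). Paw a w * Pwb w b / Pw w)"
  have Paw_nonneg: "0 \<le> Paw a w" and Pwb_nonneg: "0 \<le> Pwb w b" and Pw_nonneg: "0 \<le> Pw w"
    if "a \<in> A" "w \<in> W" "b \<in> B" for a w b
    using assms that by (auto simp: Paw_def Pwb_def Pw_def intro!: sum_nonneg)
  have marginals_pos: "0 < Paw a w \<and> 0 < Pwb w b \<and> 0 < Pw w"
    if "a \<in> A" "w \<in> W" "b \<in> B" "0 < P a w b" for a w b
  proof -
    have "0 < Paw a w" "0 < Pwb w b"
      using assms that by (auto simp: Paw_def Pwb_def intro!: sum_pos2)
    moreover from this have "0 < Pw w"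
      using assms that Paw_nonneg by (auto simp: Pw_def Paw_def[symmetric] intro!: sum_pos2)
    ultimately show ?thesis by simp
  qed
  have "sum q (W \<times> A \<times> B) = (\<Sum>w\<in>W. (\<Sum>a\<in>A. Paw a w) * (\<Sum>b\<in>B. Pwb w b) / Pw w)"
    by (simp add: q_def sum.cartesian_product[symmetric] sum_product sum_divide_distrib)
  also have "\<dots> = (\<Sum>w\<in>W. Pw w)"
    by (intro sum.cong refl) (simp add: Paw_def Pwb_def Pw_def sum.swap[of _ A B])
  also have "\<dots> = sum p (W \<times> A \<times> B)"
    by (simp add: p_def Pw_def sum.cartesian_product[symmetric])
  finally have "0 \<le> (\<Sum>x\<in>W \<times> A \<times> B. p x * log 2 (p x / q x))"
    using assms marginals_pos
    by (intro gibbs_inequality) (auto simp: p_def q_def Paw_nonneg Pwb_nonneg Pw_nonneg)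
  also have "\<dots> = (\<Sum>w\<in>W. \<Sum>a\<in>A. \<Sum>b\<in>B. P a w b * log 2 (P a w b) + P a w b * log 2 (Pw w)
                     - P a w b * log 2 (Paw a w) - P a w b * log 2 (Pwb w b))"
    unfolding sum.cartesian_product using nonneg marginals_pos
    by (intro sum.cong refl) (auto simp: p_def q_def intro!: mult_log_ratio_expand)
  also have "\<dots> = (\<Sum>a\<in>A. \<Sum>w\<in>W. \<Sum>b\<in>B. P a w b * log 2 (P a w b))
                   + (\<Sum>w\<in>W. Pw w * log 2 (Pw w))
                   - (\<Sum>a\<in>A. \<Sum>w\<in>W. Paw a w * log 2 (Paw a w))
                   - (\<Sum>w\<in>W. \<Sum>b\<in>B. Pwb w b * log 2 (Pwb w b))"
    by (simp add: sum_subtractf sum.distrib sum_distrib_right Paw_def Pwb_def Pw_def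
        sum.swap[of _ A W] sum.swap[of _ A B])
  finally show ?thesis
    by (simp add: Paw_def Pwb_def Pw_def)
qed

lemma concave_increments_telescope:
  fixes H :: "nat \<Rightarrow> real"
  assumes concave: "\<And>j. H (Suc (Suc j)) + H j \<le> 2 * H (Suc j)" and "n + k \<le> Suc N"
  shows "real k * (H (Suc N) - H N) \<le> H (n + k) - H n"
  using assms(2)
proof (induction k)
  case (Suc k)
  have "decseq (\<lambda>i. H (Suc i) - H i)"
    unfolding decseq_Suc_iff using concave by (simp add: algebra_simps)
  then have "H (Suc N) - H N \<le> H (Suc (n + k)) - H (n + k)"
    using Suc.prems by (auto dest: decseqD)
  then show ?case
    using Suc by (simp add: algebra_simps)
qed simp

lemma finite_words [simp]: "finite (words n :: 'a::finite list set)"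
  using finite_lists_length_eq[of "UNIV :: 'a set" n] by (simp add: words_def)

lemma sum_words_append:
  fixes g :: "'a list \<Rightarrow> 'b::comm_monoid_add"
  shows "(\<Sum>x\<in>words (n + m). g x) = (\<Sum>u\<in>words n. \<Sum>v\<in>words m. g (u @ v))"
proof -
  have "bij_betw (\<lambda>(u, v). u @ v) (words n \<times> words m) (words (n + m) :: 'a list set)"
    by (rule bij_betwI[where g = "\<lambda>x. (take n x, drop n x)"]) (auto simp: words_def)
  then show ?thesis
    by (simp add: sum.reindex_bij_betw[symmetric] sum.cartesian_product case_prod_unfold)
qed

definition block_event ::
    "'m measure \<Rightarrow> (nat \<Rightarrow> 'm \<Rightarrow> 'a) \<Rightarrow> nat \<Rightarrow> nat \<Rightarrow> 'a list \<Rightarrow> 'm set" where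
  "block_event M X s n w = {\<omega> \<in> space M. map (\<lambda>i. X (s + i) \<omega>) [0..<n] = w}"

lemma block_prob_eq_measure: "block_prob M X s n w = measure M (block_event M X s n w)"
  by (simp add: block_prob_def block_event_def)

lemma sets_block_event:
  assumes "\<And>i. X i \<in> M \<rightarrow>\<^sub>M count_space UNIV"
  shows "block_event M X s n w \<in> sets M"
proof (cases "length w = n")
  case True
  then have "block_event M X s n w = {\<omega> \<in> space M. \<forall>i\<in>{..<n}. X (s + i) \<omega> = w ! i}"
    by (auto simp: block_event_def list_eq_iff_nth_eq)
  also have "\<dots> \<in> sets M"
    using assms by (intro sets.sets_Collect_finite_All) (auto intro: measurable_count_space_const)
  finally show ?thesis .
next
  case False
  then have "block_event M X s n w = {}"
    by (auto simp: block_event_def)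
  then show ?thesis by simp
qed

lemma block_event_append:
  assumes "length u = n"
  shows "block_event M X s (n + m) (u @ v) = block_event M X s n u \<inter> block_event M X (s + n) m v"
proof -
  have "map f [0..<n + m] = map f [0..<n] @ map (\<lambda>i. f (n + i)) [0..<m]" for f :: "nat \<Rightarrow> 'a"
    by (induction m) auto
  then show ?thesis
    using assms by (auto simp: block_event_def add.assoc)
qed

lemma measure_eq_sum_block_events:
  fixes X :: "nat \<Rightarrow> 'm \<Rightarrow> 'a::finite"
  assumes "finite_measure M" and "\<And>i. X i \<in> M \<rightarrow>\<^sub>M count_space UNIV" and "A \<in> sets M"
  shows "measure M A = (\<Sum>w\<in>words n. measure M (A \<inter> block_event M X s n w))"
proof -
  have "A = (\<Union>w\<in>words n. A \<inter> block_event M X s n w)"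
    using sets.sets_into_space[OF assms(3)] by (auto simp: block_event_def words_def)
  also have "measure M \<dots> = (\<Sum>w\<in>words n. measure M (A \<inter> block_event M X s n w))"
  proof (rule finite_measure.finite_measure_finite_Union[OF assms(1)])
    show "disjoint_family_on (\<lambda>w. A \<inter> block_event M X s n w) (words n)"
      by (auto simp: disjoint_family_on_def block_event_def)
  qed (auto intro!: sets_block_event assms(2,3))
  finally show ?thesis .
qed

lemma block_prob_sum_suffixes:
  fixes X :: "nat \<Rightarrow> 'm \<Rightarrow> 'a::finite"
  assumes "finite_measure M" and "\<And>i. X i \<in> M \<rightarrow>\<^sub>M count_space UNIV" and "length u = n"
  shows "(\<Sum>v\<in>words m. block_prob M X s (n + m) (u @ v)) = block_prob M X s n u"
  using measure_eq_sum_block_events[OF assms(1,2) sets_block_event[OF assms(2)]]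
  by (simp add: block_prob_eq_measure block_event_append[OF assms(3)])

lemma block_prob_sum_prefixes:
  fixes X :: "nat \<Rightarrow> 'm \<Rightarrow> 'a::finite"
  assumes "finite_measure M" and "\<And>i. X i \<in> M \<rightarrow>\<^sub>M count_space UNIV" and "length v = m"
  shows "(\<Sum>u\<in>words n. block_prob M X s (n + m) (u @ v)) = block_prob M X (s + n) m v"
proof -
  have "(\<Sum>u\<in>words n. block_prob M X s (n + m) (u @ v))
      = (\<Sum>u\<in>words n. measure M (block_event M X (s + n) m v \<inter> block_event M X s n u))"
    by (intro sum.cong refl) (simp add: block_prob_eq_measure block_event_append words_def Int_commute)
  also have "\<dots> = block_prob M X (s + n) m v"
    using measure_eq_sum_block_events[where A = "block_event M X (s + n) m v" and n = n and s = s,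
        OF assms(1,2) sets_block_event[OF assms(2)]]
    by (simp add: block_prob_eq_measure)
  finally show ?thesis .
qed

lemma block_entropy_eq:
  "block_entropy M X n = - (\<Sum>w\<in>words n. block_prob M X 0 n w * log 2 (block_prob M X 0 n w))"
  unfolding block_entropy_def Let_def by (intro arg_cong[where f = uminus] sum.cong) auto

lemma stationary_processD:
  assumes "stationary_process M X"
  shows "finite_measure M" and "\<And>i. X i \<in> M \<rightarrow>\<^sub>M count_space UNIV"
    and "\<And>s. block_prob M X s n w = block_prob M X 0 n w"
  using assms by (auto simp: stationary_process_def prob_space_def)

lemma stationary_block_prob_sum_suffixes:
  fixes X :: "nat \<Rightarrow> 'm \<Rightarrow> 'a::finite"
  assumes "stationary_process M X" and "length u = n"
  shows "(\<Sum>v\<in>words m. block_prob M X 0 (n + m) (u @ v)) = block_prob M X 0 n u"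
proof -
  have "finite_measure M" and "\<And>i. X i \<in> M \<rightarrow>\<^sub>M count_space UNIV"
    using stationary_processD[OF assms(1)] by blast+
  then show ?thesis
    using block_prob_sum_suffixes[where X = X] assms(2) by blast
qed

lemma stationary_block_prob_sum_prefixes:
  fixes X :: "nat \<Rightarrow> 'm \<Rightarrow> 'a::finite"
  assumes "stationary_process M X" and "length v = m"
  shows "(\<Sum>u\<in>words n. block_prob M X 0 (n + m) (u @ v)) = block_prob M X 0 m v"
proof -
  have "finite_measure M" and "\<And>i. X i \<in> M \<rightarrow>\<^sub>M count_space UNIV"
    using stationary_processD[OF assms(1)] by blast+
  then show ?thesis
    using block_prob_sum_prefixes[where X = X] stationary_processD(3)[OF assms(1)] assms(2)
    by simp
qed

lemma block_entropy_strong_subadditivity: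
  fixes X :: "nat \<Rightarrow> 'm \<Rightarrow> 'a::finite"
  assumes "stationary_process M X"
  shows "block_entropy M X (k + n + l) + block_entropy M X n
    \<le> block_entropy M X (k + n) + block_entropy M X (n + l)"
proof -
  define P where "P u w v = block_prob M X 0 (k + n + l) (u @ w @ v)" for u w v :: "'a list"
  have sum_right: "(\<Sum>v\<in>words l. P u w v) = block_prob M X 0 (k + n) (u @ w)"
    if "u \<in> words k" "w \<in> words n" for u w
    using stationary_block_prob_sum_suffixes[OF assms, of "u @ w" "k + n" l] that
    by (simp add: P_def words_def)
  have sum_left: "(\<Sum>u\<in>words k. P u w v) = block_prob M X 0 (n + l) (w @ v)"
    if "w \<in> words n" "v \<in> words l" for w v
    using stationary_block_prob_sum_prefixes[OF assms, of "w @ v" "n + l" k] that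
    by (simp add: P_def words_def add.assoc)
  have sum_outer: "(\<Sum>u\<in>words k. \<Sum>v\<in>words l. P u w v) = block_prob M X 0 n w"
    if "w \<in> words n" for w
  proof -
    have "(\<Sum>u\<in>words k. \<Sum>v\<in>words l. P u w v)
        = (\<Sum>u\<in>words k. block_prob M X 0 (k + n) (u @ w))"
      using that by (intro sum.cong refl sum_right)
    also have "\<dots> = block_prob M X 0 n w"
      using stationary_block_prob_sum_prefixes[OF assms, of w n k] that by (simp add: words_def)
    finally show ?thesis .
  qed
  have joint: "(\<Sum>u\<in>words k. \<Sum>w\<in>words n. \<Sum>v\<in>words l. P u w v * log 2 (P u w v))
      = - block_entropy M X (k + n + l)"
    unfolding block_entropy_eq minus_minus sum_words_append by (simp add: P_def)
  have left_pair: "(\<Sum>u\<in>words k. \<Sum>w\<in>words n.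
      (\<Sum>v\<in>words l. P u w v) * log 2 (\<Sum>v\<in>words l. P u w v)) = - block_entropy M X (k + n)"
    unfolding block_entropy_eq minus_minus sum_words_append
    by (intro sum.cong refl) (simp only: sum_right)
  have right_pair: "(\<Sum>w\<in>words n. \<Sum>v\<in>words l.
      (\<Sum>u\<in>words k. P u w v) * log 2 (\<Sum>u\<in>words k. P u w v)) = - block_entropy M X (n + l)"
    unfolding block_entropy_eq minus_minus sum_words_append
    by (intro sum.cong refl) (simp only: sum_left)
  have middle: "(\<Sum>w\<in>words n. (\<Sum>u\<in>words k. \<Sum>v\<in>words l. P u w v)
      * log 2 (\<Sum>u\<in>words k. \<Sum>v\<in>words l. P u w v)) = - block_entropy M X n"
    unfolding block_entropy_eq minus_minus by (intro sum.cong refl) (simp only: sum_outer)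
  have "0 \<le> P u w v" for u w v
    by (simp add: P_def block_prob_def)
  then show ?thesis
    using entropy_strong_subadditivity[of "words k" "words n" "words l" P]
      joint left_pair right_pair middle
    by simp
qed

lemma halves_mutual_info_eq:
  fixes X :: "nat \<Rightarrow> 'm \<Rightarrow> 'a::finite"
  assumes "stationary_process M X"
  shows "halves_mutual_info M X m = 2 * block_entropy M X m - block_entropy M X (2 * m)"
proof -
  define P where "P u v = block_prob M X 0 (m + m) (u @ v)" for u v :: "'a list"
  have sum_right: "(\<Sum>v\<in>words m. P u v) = block_prob M X 0 m u" if "u \<in> words m" for u
    using stationary_block_prob_sum_suffixes[OF assms, of u m m] that by (simp add: P_def words_def)
  have sum_left: "(\<Sum>u\<in>words m. P u v) = block_prob M X 0 m v" if "v \<in> words m" for v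
    using stationary_block_prob_sum_prefixes[OF assms, of v m m] that by (simp add: P_def words_def)
  have "halves_mutual_info M X m
      = (\<Sum>u\<in>words m. \<Sum>v\<in>words m.
           P u v * log 2 (P u v / ((\<Sum>v'\<in>words m. P u v') * (\<Sum>u'\<in>words m. P u' v))))"
    unfolding halves_mutual_info_def Let_def
    by (intro sum.cong refl)
       (simp only: sum_left sum_right, simp add: P_def mult_2 stationary_processD(3)[OF assms, of m])
  also have "\<dots> = (\<Sum>u\<in>words m. \<Sum>v\<in>words m. P u v * log 2 (P u v))
      - (\<Sum>u\<in>words m. (\<Sum>v\<in>words m. P u v) * log 2 (\<Sum>v\<in>words m. P u v))
      - (\<Sum>v\<in>words m. (\<Sum>u\<in>words m. P u v) * log 2 (\<Sum>u\<in>words m. P u v))"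
    by (rule mutual_information_eq_entropies) (simp_all add: P_def block_prob_def)
  also have "\<dots> = 2 * block_entropy M X m - block_entropy M X (2 * m)"
  proof -
    have "(\<Sum>u\<in>words m. \<Sum>v\<in>words m. P u v * log 2 (P u v)) = - block_entropy M X (2 * m)"
      unfolding block_entropy_eq minus_minus mult_2 sum_words_append P_def ..
    moreover have "(\<Sum>u\<in>words m. (\<Sum>v\<in>words m. P u v) * log 2 (\<Sum>v\<in>words m. P u v))
        = - block_entropy M X m"
      unfolding block_entropy_eq minus_minus by (intro sum.cong refl) (simp only: sum_right)
    moreover have "(\<Sum>v\<in>words m. (\<Sum>u\<in>words m. P u v) * log 2 (\<Sum>u\<in>words m. P u v))
        = - block_entropy M X m"
      unfolding block_entropy_eq minus_minus by (intro sum.cong refl) (simp only: sum_left)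
    ultimately show ?thesis
      by simp
  qed
  finally show ?thesis .
qed

theorem proposition14:
  fixes M :: "'m measure" and X :: "nat \<Rightarrow> 'm \<Rightarrow> 'a::finite" and L :: nat
  assumes "stationary_process M X"
    and "L \<ge> 2"
  shows "entropy_rate_est M X L - entropy_gain M X L \<ge> excess_est M X L / real L"
proof -
  define H where "H = block_entropy M X"
  define m where "m = L div 2"
  obtain N where L: "L = Suc N"
    using assms(2) by (cases L) auto
  define h where "h = H (Suc N) - H N"
  have concave: "\<And>j. H (Suc (Suc j)) + H j \<le> 2 * H (Suc j)"
    using block_entropy_strong_subadditivity[OF assms(1), of 1 _ 1] by (simp add: H_def)
  have "2 * m \<le> L"
    by (simp add: m_def)
  have first_half: "real m * h \<le> H (2 * m) - H m"
    using concave_increments_telescope[where H = H, OF concave, of m m N] \<open>2 * m \<le> L\<close>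
    by (simp add: h_def L mult_2)
  have rest: "real (L - 2 * m) * h \<le> H L - H (2 * m)"
    using concave_increments_telescope[where H = H, OF concave, of "2 * m" "L - 2 * m" N]
      \<open>2 * m \<le> L\<close>
    by (simp add: h_def L)
  have "excess_est M X L = halves_mutual_info M X m"
    by (auto simp: excess_est_def m_def elim!: oddE)
  also have "\<dots> = 2 * H m - H (2 * m)"
    unfolding H_def by (rule halves_mutual_info_eq[OF assms(1)])
  also have "\<dots> \<le> H L - real L * h"
    using first_half rest \<open>2 * m \<le> L\<close> by (simp add: algebra_simps)
  finally have "excess_est M X L / real L \<le> H L / real L - h"
    using assms(2) by (simp add: field_simps)
  then show ?thesis
    by (simp add: entropy_rate_est_def entropy_gain_def H_def h_def L)
qed

end
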